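(* Let $\gamma$ be the geodesic with $\gamma(0)=1$ and $\dot\gamma(0)=z_0+x_0\in\mathfrak z\oplus\mathfrak v$, let $J=J_{z_0}$ and $x'(t)=e^{tJ}x_0$. A (smooth) vector field along $\gamma$ of the form $Y(t)=z(t)+e^{tJ}v(t)$, with $z(t)\in\mathfrak z$ and $v(t)\in\mathfrak v$ for each $t$, is a Jacobi field if and only if there is a constant $\zeta\in\mathfrak z$ such that for all $t$ $$\dot z(t)-[e^{tJ}v(t),x'(t)]=\zeta,\qquad e^{tJ}\ddot v(t)+e^{tJ}J\dot v(t)-J_\zeta x'(t)=0.$$
   Context: Let $N$ be a connected, simply connected, 2-step nilpotent real Lie group with Lie algebra $\mathfrak n$ and center $\mathfrak z$. Let $\langle\,,\rangle$ be an inner product on $\mathfrak n$, meaning a nondegenerate symmetric bilinear form (possibly indefinite); the same symbol denotes the induced left-invariant pseudo-Riemannian metric on $N$, with Levi-Civita connection $\nabla$. Assume the restriction of $\langle\,,\rangle$ to $\mathfrak z$ is nondegenerate and put $\mathfrak v=\mathfrak z^\perp$, so $\mathfrak n=\mathfrak z\oplus\mathfrak v$ orthogonally. For $z\in\mathfrak z$ define $J_z:\mathfrak v\to\mathfrak v$ by $\langle J_zx,y\rangle=\langle z,[x,y]\rangle$ for all $y\in\mathfrak v$; $J_z$ is skew-adjoint. All tangent spaces of $N$ are identified with $\mathfrak n=T_1N$ via left translation, so vector fields along a curve are $\mathfrak n$-valued functions; with this identification the geodesic $\gamma$ with $\gamma(0)=1$, $\dot\gamma(0)=z_0+x_0$ ($z_0\in\mathfrak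 z$, $x_0\in\mathfrak v$) satisfies $\dot\gamma(t)=z_0+e^{tJ_{z_0}}x_0$. A Jacobi field along $\gamma$ is a vector field $Y$ along $\gamma$ with $\nabla_{\dot\gamma}\nabla_{\dot\gamma}Y+R(Y,\dot\gamma)\dot\gamma=0$, where $R(X,Y)=\nabla_X\nabla_Y-\nabla_Y\nabla_X-\nabla_{[X,Y]}$ (equivalently, the variation fields of geodesic variations of $\gamma$). *)

theory Defs
  imports "HOL-Analysis.Analysis"
begin

text \<open>The Lie algebra n is modelled by a finite-dimensional real vector space 'a
(type class euclidean_space; its norm only provides the topology), with a Lie bracket
br and a (possibly indefinite) inner product g.  All vector fields along curves are
left-trivialised, i.e. are functions real to 'a.\<close>

definition nondegenerate :: "('a::zero \<Rightarrow> 'a \<Rightarrow> real) \<Rightarrow> bool" where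
  "nondegenerate g \<longleftrightarrow> (\<forall>x. (\<forall>y. g x y = 0) \<longrightarrow> x = 0)"

definition nondegenerate_on :: "('a::zero \<Rightarrow> 'a \<Rightarrow> real) \<Rightarrow> 'a set \<Rightarrow> bool" where
  "nondegenerate_on g S \<longleftrightarrow> (\<forall>x\<in>S. (\<forall>y\<in>S. g x y = 0) \<longrightarrow> x = 0)"

definition center :: "('a \<Rightarrow> 'a \<Rightarrow> 'a::real_vector) \<Rightarrow> 'a set" where
  "center br = {z. \<forall>x. br z x = 0}"

definition orth :: "('a \<Rightarrow> 'a \<Rightarrow> real) \<Rightarrow> 'a set \<Rightarrow> 'a set" where
  "orth g S = {x. \<forall>s\<in>S. g x s = 0}"

text \<open>Levi-Civita connection on left-invariant fields (Koszul formula).\<close>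
definition lc_nabla :: "('a::real_vector \<Rightarrow> 'a \<Rightarrow> real) \<Rightarrow> ('a \<Rightarrow> 'a \<Rightarrow> 'a) \<Rightarrow> 'a \<Rightarrow> 'a \<Rightarrow> 'a" where
  "lc_nabla g br X Y =
     (THE u. \<forall>W. g u W = (g (br X Y) W - g (br Y W) X + g (br W X) Y) / 2)"

definition curv :: "('a \<Rightarrow> 'a \<Rightarrow> real) \<Rightarrow> ('a \<Rightarrow> 'a \<Rightarrow> 'a::real_vector) \<Rightarrow> 'a \<Rightarrow> 'a \<Rightarrow> 'a \<Rightarrow> 'a" where
  "curv g br X Y W =
     lc_nabla g br X (lc_nabla g br Y W) - lc_nabla g br Y (lc_nabla g br X W)
     - lc_nabla g br (br X Y) W"

definition Jop :: "('a \<Rightarrow> 'a \<Rightarrow> real) \<Rightarrow> ('a \<Rightarrow> 'a \<Rightarrow> 'a::real_vector) \<Rightarrow> 'a \<Rightarrow> 'a \<Rightarrow> 'a" where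
  "Jop g br z x =
     (THE u. u \<in> orth g (center br) \<and> (\<forall>y\<in>orth g (center br). g u y = g z (br x y)))"

definition expop :: "('a \<Rightarrow> 'a) \<Rightarrow> real \<Rightarrow> 'a \<Rightarrow> 'a::real_normed_vector" where
  "expop J t x = (\<Sum>n. (t ^ n / fact n) *\<^sub>R (J ^^ n) x)"

definition smooth_curve :: "(real \<Rightarrow> 'a::real_normed_vector) \<Rightarrow> bool" where
  "smooth_curve f \<longleftrightarrow>
     (\<forall>k t. (((\<lambda>h s. vector_derivative h (at s)) ^^ k) f) differentiable (at t))"

definition cov_deriv :: "('a \<Rightarrow> 'a \<Rightarrow> real) \<Rightarrow> ('a \<Rightarrow> 'a \<Rightarrow> 'a::real_normed_vector)
    \<Rightarrow> (real \<Rightarrow> 'a) \<Rightarrow> (real \<Rightarrow> 'a) \<Rightarrow> real \<Rightarrow> 'a" where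
  "cov_deriv g br c Y t = vector_derivative Y (at t) + lc_nabla g br (c t) (Y t)"

definition is_jacobi :: "('a \<Rightarrow> 'a \<Rightarrow> real) \<Rightarrow> ('a \<Rightarrow> 'a \<Rightarrow> 'a::real_normed_vector)
    \<Rightarrow> (real \<Rightarrow> 'a) \<Rightarrow> (real \<Rightarrow> 'a) \<Rightarrow> bool" where
  "is_jacobi g br c Y \<longleftrightarrow>
     (\<forall>t. cov_deriv g br c (cov_deriv g br c Y) t + curv g br (Y t) (c t) (c t) = 0)"

end

(* Write n = Z + V with Z the centre and V its orthogonal complement.  By the Koszul formula,
   nabla (a1 + a2) (b1 + b2) = 1/2 [a2, b2] - 1/2 J a1 b2 - 1/2 J b1 a2 for a1, b1 in Z and
   a2, b2 in V.  Along gamma = z0 + X with X' = J X (J = J z0), a field Y = zY + W therefore has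
   Jacobi operator q' + (W'' - J W' - J_q X), where q = zY' - [W, X] takes values in Z.  The
   two components vanish separately, so the Z-equation says that q is a constant zeta, and for
   W = e^{tJ} v one has W'' - J W' = e^{tJ} (v'' + J v'), which turns the V-equation into the
   second equation of the theorem. *)
theory Submission
  imports Defs
begin

lemma inner_sum_orthonormal:
  fixes B :: "'a::euclidean_space set"
  assumes "finite B" and "pairwise orthogonal B" and "\<And>x. x \<in> B \<Longrightarrow> norm x = 1"
    and "b \<in> B"
  shows "(\<Sum>b'\<in>B. a b' *\<^sub>R b') \<bullet> b = a b"
proof -
  have "a b' * (b' \<bullet> b) = (if b' = b then a b else 0)" if "b' \<in> B" for b'
    using assms that by (auto simp: pairwise_def orthogonal_def norm_eq_1)
  then show ?thesis
    using assms by (simp add: inner_sum_left sum.delta' cong: sum.cong)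
qed

text \<open>For an orthonormal basis B of S, the map u \<mapsto> \<Sum>b\<in>B. g u b *R b is injective on S by
  nondegeneracy, hence onto S by dimension.\<close>
lemma nondegenerate_on_representation:
  fixes g :: "'a::euclidean_space \<Rightarrow> 'a \<Rightarrow> real"
  assumes S: "subspace S" and g: "bilinear g" and nd: "nondegenerate_on g S" and f: "linear f"
  shows "\<exists>u\<in>S. \<forall>y\<in>S. g u y = f y"
proof -
  obtain B where B: "B \<subseteq> S" "pairwise orthogonal B" "\<And>x. x\<in>B \<Longrightarrow> norm x = 1"
      "independent B" "span B = S"
    using orthonormal_basis_subspace[OF S] by metis
  have finB: "finite B" using B(4) independent_imp_finite by blast
  define L where "L u = (\<Sum>b\<in>B. g u b *\<^sub>R b)" for u
  have lin_right: "linear (g u)" for u using g by (simp add: bilinear_def)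
  have lin_left: "linear (\<lambda>u. g u y)" for y using g by (simp add: bilinear_def)
  have linL: "linear L"
    by (rule linearI) (simp_all add: L_def linear_add[OF lin_left] linear_scale[OF lin_left]
        scaleR_add_left sum.distrib scaleR_sum_right)
  have L_coeff: "L u \<bullet> b = g u b" if "b \<in> B" for u b
    unfolding L_def by (rule inner_sum_orthonormal[OF finB B(2,3) that])
  have eq_on_S: "g u y = h y" if "linear h" "\<And>b. b \<in> B \<Longrightarrow> g u b = h b" "y \<in> S" for u h y
    using linear_eq_on_span[OF lin_right[of u] that(1,2)] that(3) B(5) by simp
  have "inj_on L S"
    unfolding linear_inj_on_iff_eq_0[OF linL S]
  proof (intro ballI impI)
    fix x assume x: "x \<in> S" "L x = 0"
    then have "g x y = 0" if "y \<in> S" for y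
      using eq_on_S[OF linear_zero, of x y] L_coeff[of _ x] that by simp
    then show "x = 0" using nd x(1) unfolding nondegenerate_on_def by blast
  qed
  moreover have in_S: "(\<Sum>b\<in>B. a b *\<^sub>R b) \<in> S" for a
    using B(1) by (intro subspace_sum[OF S] subspace_scale[OF S]) auto
  ultimately have "L ` S = S"
    using subspace_dim_equal[OF linear_subspace_image[OF linL S] S] dim_image_eq[OF linL, of S] S
    by (metis L_def image_subsetI span_eq_iff order_refl)
  then obtain u where u: "u \<in> S" "L u = (\<Sum>b\<in>B. f b *\<^sub>R b)"
    using in_S by (metis imageE)
  then have "g u b = f b" if "b \<in> B" for b
    using L_coeff[OF that, of u] inner_sum_orthonormal[OF finB B(2,3) that, of f] by simp
  then show ?thesis using eq_on_S[OF f] u(1) by blast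
qed

lemma has_vector_derivative_zero_iff_constant:
  assumes f: "\<And>t. (f has_vector_derivative f' t) (at t)"
  shows "(\<forall>t. f' t = 0) \<longleftrightarrow> (\<exists>c. \<forall>t. f t = c)"
proof
  assume "\<forall>t. f' t = 0"
  then have "(f has_vector_derivative 0) (at t within UNIV)" for t
    using f[of t] by simp
  then obtain c where "\<And>t. t \<in> UNIV \<Longrightarrow> f t = c"
    using has_vector_derivative_zero_constant[OF convex_UNIV] by blast
  then show "\<exists>c. \<forall>t. f t = c" by blast
next
  assume "\<exists>c. \<forall>t. f t = c"
  then obtain c where "f = (\<lambda>_. c)" by blast
  then have "(f has_vector_derivative 0) (at t)" for t by simp
  then show "\<forall>t. f' t = 0"
    using vector_derivative_unique_at[OF f] by blast
qed

lemma has_vector_derivative_annihilated: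
  assumes "bounded_linear M" and "\<And>s. M (u s) = 0" and "(u has_vector_derivative u') (at t)"
  shows "M u' = 0"
proof (rule vector_derivative_unique_at)
  show "((\<lambda>s. M (u s)) has_vector_derivative M u') (at t)"
    by (rule bounded_linear.has_vector_derivative[OF assms(1,3)])
  show "((\<lambda>s. M (u s)) has_vector_derivative 0) (at t)"
    using assms(2) by simp
qed

lemma has_vector_derivative_scaleR_const:
  "(f has_vector_derivative f') F \<Longrightarrow> ((\<lambda>s. c *\<^sub>R f s) has_vector_derivative c *\<^sub>R f') F"
  by (rule bounded_linear.has_vector_derivative[OF bounded_linear_scaleR_right])

lemma smooth_curve_has_vector_derivative:
  assumes "smooth_curve f"
  shows "(f has_vector_derivative vector_derivative f (at t)) (at t)"
  using assms[unfolded smooth_curve_def, rule_format, of 0 t]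
  by (simp add: vector_derivative_works[symmetric])

lemma smooth_curve_has_second_vector_derivative:
  assumes "smooth_curve f"
  shows "((\<lambda>s. vector_derivative f (at s)) has_vector_derivative
           vector_derivative (\<lambda>s. vector_derivative f (at s)) (at t)) (at t)"
  using assms[unfolded smooth_curve_def, rule_format, of "Suc 0" t]
  by (simp add: vector_derivative_works[symmetric])

lemma linear_funpow:
  assumes "linear (L :: 'a::real_vector \<Rightarrow> 'a)"
  shows "linear (L ^^ n)"
  by (induction n) (simp_all add: linear_id[unfolded id_def] linear_compose[OF _ assms, unfolded o_def])

lemma norm_funpow_le:
  fixes L :: "'a::real_normed_vector \<Rightarrow> 'a"
  assumes "\<And>x. norm (L x) \<le> norm x * K" and "K \<ge> 0"
  shows "norm ((L ^^ n) x) \<le> K ^ n * norm x"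
proof (induction n)
  case (Suc n)
  have "norm ((L ^^ Suc n) x) \<le> norm ((L ^^ n) x) * K" using assms(1) by simp
  also have "\<dots> \<le> (K ^ n * norm x) * K" by (rule mult_right_mono[OF Suc assms(2)])
  finally show ?case by (simp add: algebra_simps)
qed simp

lemma summable_expop:
  fixes L :: "'a::euclidean_space \<Rightarrow> 'a"
  assumes "linear L"
  shows "summable (\<lambda>n. (t ^ n / fact n) *\<^sub>R (L ^^ n) x)"
proof -
  obtain K where K: "K > 0" "\<And>x. norm (L x) \<le> norm x * K"
    using bounded_linear.pos_bounded assms linear_conv_bounded_linear by blast
  have "norm ((t ^ n / fact n) *\<^sub>R (L ^^ n) x) \<le> norm x * (inverse (fact n) * (\<bar>t\<bar> * K) ^ n)"
    for n
  proof -
    have "norm ((t ^ n / fact n) *\<^sub>R (L ^^ n) x) = (\<bar>t\<bar> ^ n / fact n) * norm ((L ^^ n) x)"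
      by (simp add: power_abs)
    also have "\<dots> \<le> (\<bar>t\<bar> ^ n / fact n) * (K ^ n * norm x)"
      using norm_funpow_le[OF K(2)] K(1) by (intro mult_left_mono) auto
    finally show ?thesis by (simp add: power_mult_distrib divide_inverse algebra_simps)
  qed
  then show ?thesis
    by (rule summable_comparison_test'[OF summable_mult[OF summable_exp]])
qed

lemma bounded_linear_expop:
  fixes L :: "'a::euclidean_space \<Rightarrow> 'a"
  assumes "linear L" and "bounded_linear M"
  shows "M (expop L t x) = (\<Sum>n. M ((t ^ n / fact n) *\<^sub>R (L ^^ n) x))"
  unfolding expop_def using bounded_linear.suminf[OF assms(2) summable_expop[OF assms(1)]] by simp

lemma linear_expop:
  fixes L :: "'a::euclidean_space \<Rightarrow> 'a"
  assumes L: "linear L"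
  shows "linear (expop L t)"
proof (rule linearI)
  fix x y
  show "expop L t (x + y) = expop L t x + expop L t y"
    unfolding expop_def
    by (simp add: linear_add[OF linear_funpow[OF L]] scaleR_add_right
        suminf_add[OF summable_expop[OF L] summable_expop[OF L]])
next
  fix r x
  have "expop L t (r *\<^sub>R x) = (\<Sum>n. r *\<^sub>R ((t ^ n / fact n) *\<^sub>R (L ^^ n) x))"
    unfolding expop_def by (simp add: linear_scale[OF linear_funpow[OF L]] mult.commute)
  then show "expop L t (r *\<^sub>R x) = r *\<^sub>R expop L t x"
    unfolding expop_def by (simp add: suminf_scaleR_right[OF summable_expop[OF L]])
qed

lemma expop_commute:
  fixes L :: "'a::euclidean_space \<Rightarrow> 'a"
  assumes "linear L"
  shows "L (expop L t x) = expop L t (L x)"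
  using bounded_linear_expop[OF assms assms[unfolded linear_conv_bounded_linear]]
  by (simp add: expop_def linear_scale[OF assms] funpow_swap1)

lemma expop_annihilated:
  fixes L :: "'a::euclidean_space \<Rightarrow> 'a"
  assumes "linear L" and "bounded_linear (M :: 'a \<Rightarrow> real)" and "\<And>n. M ((L ^^ n) x) = 0"
  shows "M (expop L t x) = 0"
  using bounded_linear_expop[OF assms(1,2)]
  by (simp add: linear_scale[OF bounded_linear.linear[OF assms(2)]] assms(3))

text \<open>Componentwise, e^{sL} x is a real power series in s whose termwise derivative is the
  series of e^{sL} (L x).\<close>
lemma has_vector_derivative_expop:
  fixes L :: "'a::euclidean_space \<Rightarrow> 'a"
  assumes L: "linear L"
  shows "((\<lambda>s. expop L s x) has_vector_derivative L (expop L t x)) (at t)"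
proof -
  define c where "c y b n = ((L ^^ n) y \<bullet> b) / fact n" for y b n
  have c_eq: "(\<lambda>n. c y b n * s ^ n) = (\<lambda>n. ((s ^ n / fact n) *\<^sub>R (L ^^ n) y) \<bullet> b)" for y b s
    by (simp add: fun_eq_iff c_def)
  have series: "expop L s y \<bullet> b = (\<Sum>n. c y b n * s ^ n)" for s y b
    using bounded_linear_expop[OF L bounded_linear_inner_left[of b], of s y] by (simp add: c_eq)
  have summable: "summable (\<lambda>n. c y b n * s ^ n)" for y b s
    unfolding c_eq by (rule bounded_linear.summable[OF bounded_linear_inner_left summable_expop[OF L]])
  have "diffs (c x b) = c (L x) b" for b
    by (rule ext) (simp add: diffs_def c_def funpow_Suc_right del: funpow.simps of_nat_Suc)
  then have coord: "((\<lambda>s. expop L s x \<bullet> b) has_real_derivative (expop L t (L x) \<bullet> b)) (at t)" for b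
    using termdiffs_strong_converges_everywhere[OF summable, of x b t] by (simp add: series)
  have "((\<lambda>s. \<Sum>b\<in>Basis. (expop L s x \<bullet> b) *\<^sub>R b) has_vector_derivative
           (\<Sum>b\<in>Basis. (expop L t (L x) \<bullet> b) *\<^sub>R b)) (at t)"
    by (intro has_vector_derivative_sum
        has_vector_derivative_scaleR[OF coord, THEN has_vector_derivative_eq_rhs]) auto
  then show ?thesis by (simp add: euclidean_representation expop_commute[OF L])
qed

lemma has_vector_derivative_expop_curve:
  fixes L :: "'a::euclidean_space \<Rightarrow> 'a"
  assumes L: "linear L" and u: "(u has_vector_derivative u') (at t)"
  shows "((\<lambda>s. expop L s (u s)) has_vector_derivative L (expop L t (u t)) + expop L t u') (at t)"
proof -
  have lin: "linear (expop L s)" for s by (rule linear_expop[OF L])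
  have coords: "expop L s y = (\<Sum>b\<in>Basis. (y \<bullet> b) *\<^sub>R expop L s b)" for s y
    by (subst euclidean_representation[symmetric, of y])
      (simp add: linear_sum[OF lin] linear_scale[OF lin])
  have coord: "((\<lambda>s. u s \<bullet> b) has_real_derivative (u' \<bullet> b)) (at t)" for b
    unfolding has_real_derivative_iff_has_vector_derivative
    by (rule bounded_linear.has_vector_derivative[OF bounded_linear_inner_left u])
  have "((\<lambda>s. \<Sum>b\<in>Basis. (u s \<bullet> b) *\<^sub>R expop L s b) has_vector_derivative
      (\<Sum>b\<in>Basis. (u t \<bullet> b) *\<^sub>R L (expop L t b) + (u' \<bullet> b) *\<^sub>R expop L t b)) (at t)"
    by (intro has_vector_derivative_sum has_vector_derivative_scaleR coord has_vector_derivative_expop[OF L])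
  moreover have "(\<lambda>s. expop L s (u s)) = (\<lambda>s. \<Sum>b\<in>Basis. (u s \<bullet> b) *\<^sub>R expop L s b)"
    using coords by blast
  moreover have "(\<Sum>b\<in>Basis. (u t \<bullet> b) *\<^sub>R L (expop L t b) + (u' \<bullet> b) *\<^sub>R expop L t b)
      = L (expop L t (u t)) + expop L t u'"
    by (simp add: sum.distrib coords[of t "u t"] coords[of t u'] linear_sum[OF L] linear_scale[OF L])
  ultimately show ?thesis by simp
qed

text \<open>For W s = e^{sL} u s, the combination W'' - L W' equals e^{sL} (u'' + L u').\<close>
lemma has_second_vector_derivative_expop_curve:
  fixes L :: "'a::euclidean_space \<Rightarrow> 'a"
  assumes L: "linear L"
    and u: "(u has_vector_derivative u' t) (at t)" and u': "(u' has_vector_derivative u'') (at t)"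
  defines "W \<equiv> \<lambda>s. expop L s (u s)"
  shows "(W has_vector_derivative L (W t) + expop L t (u' t)) (at t)"
    and "((\<lambda>s. L (W s) + expop L s (u' s)) has_vector_derivative
           L (L (W t) + expop L t (u' t)) + expop L t u'' + expop L t (L (u' t))) (at t)"
proof -
  show dW: "(W has_vector_derivative L (W t) + expop L t (u' t)) (at t)"
    unfolding W_def by (rule has_vector_derivative_expop_curve[OF L u])
  show "((\<lambda>s. L (W s) + expop L s (u' s)) has_vector_derivative
           L (L (W t) + expop L t (u' t)) + expop L t u'' + expop L t (L (u' t))) (at t)"
    using has_vector_derivative_add[OF
        bounded_linear.has_vector_derivative[OF L[unfolded linear_conv_bounded_linear] dW]
        has_vector_derivative_expop_curve[OF L u']]
    by (simp add: expop_commute[OF L] algebra_simps)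
qed

locale two_step_metric_lie_algebra =
  fixes br :: "'a::euclidean_space \<Rightarrow> 'a \<Rightarrow> 'a" and g :: "'a \<Rightarrow> 'a \<Rightarrow> real"
  assumes br_bilinear: "bilinear br" and br_antisym: "\<And>x y. br x y = - br y x"
    and two_step: "\<And>x y w. br (br x y) w = 0"
    and g_bilinear: "bilinear g" and g_sym: "\<And>x y. g x y = g y x"
    and g_nondeg: "nondegenerate g" and g_nondeg_center: "nondegenerate_on g (center br)"
begin

abbreviation Z where "Z \<equiv> center br"
abbreviation V where "V \<equiv> orth g Z"
abbreviation J where "J \<equiv> Jop g br"
abbreviation nabla where "nabla \<equiv> lc_nabla g br"

sublocale bracket: bounded_bilinear br
  using br_bilinear bilinear_conv_bounded_bilinear by blast

sublocale form: bounded_bilinear g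
  using g_bilinear bilinear_conv_bounded_bilinear by blast

lemma bracket_in_center [simp]: "br x y \<in> Z"
  unfolding center_def using two_step by simp

lemma bracket_center_left [simp]: "c \<in> Z \<Longrightarrow> br c x = 0"
  unfolding center_def by simp

lemma bracket_center_right [simp]: "c \<in> Z \<Longrightarrow> br x c = 0"
  using br_antisym[of x c] unfolding center_def by simp

lemma bracket_self [simp]: "br x x = 0"
  using br_antisym[of x x] by (simp add: eq_neg_iff_add_eq_0 flip: scaleR_2)

lemma subspace_center: "subspace Z"
  unfolding subspace_def center_def
  by (simp add: bracket.add_left bracket.scaleR_left bracket.zero_left)

lemma subspace_orth_center: "subspace V"
  unfolding subspace_def orth_def by (simp add: form.add_left form.scaleR_left form.zero_left)

lemmas center_closed =
  subspace_0[OF subspace_center] subspace_add[OF subspace_center]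
  subspace_diff[OF subspace_center] subspace_scale[OF subspace_center]

lemmas orth_center_closed =
  subspace_0[OF subspace_orth_center] subspace_add[OF subspace_orth_center]
  subspace_diff[OF subspace_orth_center] subspace_scale[OF subspace_orth_center]
  subspace_neg[OF subspace_orth_center]

lemma form_orth_center: "x \<in> V \<Longrightarrow> c \<in> Z \<Longrightarrow> g x c = 0"
  unfolding orth_def by simp

lemma form_center_orth: "x \<in> V \<Longrightarrow> c \<in> Z \<Longrightarrow> g c x = 0"
  using g_sym form_orth_center by metis

lemma center_orth_add_eq_0_iff:
  assumes "a \<in> Z" and "b \<in> V"
  shows "a + b = 0 \<longleftrightarrow> a = 0 \<and> b = 0"
proof
  assume "a + b = 0"
  then have "a \<in> V" using assms(2) subspace_neg[OF subspace_orth_center]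
    by (metis add.inverse_unique minus_equation_iff)
  then have "a = 0"
    using g_nondeg_center assms(1) form_orth_center unfolding nondegenerate_on_def by blast
  with \<open>a + b = 0\<close> show "a = 0 \<and> b = 0" by simp
qed simp

lemma center_orth_decomposition: "\<exists>a\<in>Z. w - a \<in> V"
proof -
  obtain a where "a \<in> Z" "\<forall>y\<in>Z. g a y = g w y"
    using nondegenerate_on_representation[OF subspace_center g_bilinear g_nondeg_center
        form.bounded_linear_right[THEN bounded_linear.linear]] by blast
  moreover from this have "w - a \<in> V" unfolding orth_def by (simp add: form.diff_left)
  ultimately show ?thesis by blast
qed

lemma form_representation: "linear f \<Longrightarrow> \<exists>u. \<forall>y. g u y = f y"
  using nondegenerate_on_representation[OF subspace_UNIV g_bilinear, of f] g_nondeg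
  unfolding nondegenerate_on_def nondegenerate_def by blast

lemma form_eqI: "(\<And>w. g u w = g u' w) \<Longrightarrow> u = u'"
  using g_nondeg unfolding nondegenerate_def
  by (metis form.diff_left eq_iff_diff_eq_0 diff_self)

lemma orth_center_eqI:
  assumes u: "u \<in> V" "u' \<in> V" and eq: "\<And>y. y \<in> V \<Longrightarrow> g u y = g u' y"
  shows "u = u'"
proof (rule form_eqI)
  fix w
  obtain a where a: "a \<in> Z" "w - a \<in> V" using center_orth_decomposition by blast
  have "g u w = g u a + g u (w - a)" by (simp add: form.diff_right)
  also have "\<dots> = g u' a + g u' (w - a)"
    using form_orth_center[OF u(1) a(1)] form_orth_center[OF u(2) a(1)] eq[OF a(2)] by simp
  also have "\<dots> = g u' w" by (simp add: form.diff_right)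
  finally show "g u w = g u' w" .
qed

text \<open>Jop only prescribes g (J z x) y for y in V; the identity holds for all w because
  both sides vanish on Z.\<close>
lemma Jop_char: "J z x \<in> V \<and> (\<forall>w. g (J z x) w = g z (br x w))"
proof -
  have "linear (\<lambda>w. g z (br x w))"
    using bounded_linear_compose[OF form.bounded_linear_right bracket.bounded_linear_right]
    by (simp add: o_def bounded_linear.linear)
  then obtain u where u: "\<forall>w. g u w = g z (br x w)" using form_representation by blast
  then have "u \<in> V" unfolding orth_def by (simp add: form.zero_right)
  moreover have "J z x = u"
    unfolding Jop_def using u \<open>u \<in> V\<close> orth_center_eqI by (intro the_equality) auto
  ultimately show ?thesis using u by simp
qed

lemma Jop_in_orth [simp]: "J z x \<in> V"
  using Jop_char by blast

lemma form_Jop: "g (J z x) w = g z (br x w)"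
  using Jop_char by blast

lemma Jop_eqI: "(\<And>w. g u w = g z (br x w)) \<Longrightarrow> J z x = u"
  using form_eqI form_Jop by metis

lemma bilinear_Jop: "bilinear J"
  unfolding bilinear_def
  by (intro conjI allI linearI; rule Jop_eqI)
    (simp_all add: form_Jop form.add_left form.scaleR_left form.add_right form.scaleR_right
      bracket.add_left bracket.scaleR_left)

sublocale Jop: bounded_bilinear J
  using bilinear_Jop bilinear_conv_bounded_bilinear by blast

definition koszul :: "'a \<Rightarrow> 'a \<Rightarrow> 'a \<Rightarrow> real" where
  "koszul a b w = (g (br a b) w - g (br b w) a + g (br w a) b) / 2"

lemma form_lc_nabla: "g (nabla a b) w = koszul a b w"
proof -
  have "linear (koszul a b)"
    by (rule linearI) (simp_all add: koszul_def bracket.add_right bracket.add_left form.add_left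
        form.add_right bracket.scaleR_left bracket.scaleR_right form.scaleR_left form.scaleR_right
        field_simps)
  then obtain u where u: "\<forall>w. g u w = koszul a b w" using form_representation by blast
  have "nabla a b = u"
    unfolding lc_nabla_def koszul_def[symmetric] using u form_eqI by (intro the_equality) auto
  then show ?thesis using u by simp
qed

lemma lc_nabla_split:
  assumes "a1 \<in> Z" "b1 \<in> Z" "a2 \<in> V" "b2 \<in> V"
  shows "nabla (a1 + a2) (b1 + b2)
           = (1/2) *\<^sub>R br a2 b2 - (1/2) *\<^sub>R J a1 b2 - (1/2) *\<^sub>R J b1 a2"
proof (rule form_eqI)
  fix w
  have "br (a1 + a2) (b1 + b2) = br a2 b2"
    using assms by (simp add: bracket.add_left bracket.add_right)
  moreover have "g (br (b1 + b2) w) (a1 + a2) = g a1 (br b2 w)"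
    using assms form_center_orth[OF assms(3) bracket_in_center]
    by (simp add: bracket.add_left form.add_right g_sym[of "br b2 w"])
  moreover have "g (br w (a1 + a2)) (b1 + b2) = - g b1 (br a2 w)"
    using assms form_center_orth[OF assms(4) bracket_in_center]
    by (simp add: bracket.add_right form.add_right br_antisym[of w a2] form.minus_left
        g_sym[of "br a2 w" b1])
  ultimately show "g (nabla (a1 + a2) (b1 + b2)) w
      = g ((1/2) *\<^sub>R br a2 b2 - (1/2) *\<^sub>R J a1 b2 - (1/2) *\<^sub>R J b1 a2) w"
    by (simp add: form_lc_nabla koszul_def form.diff_left form.scaleR_left form_Jop)
qed

lemma has_vector_derivative_in_center:
  assumes "\<And>s. u s \<in> Z" and "(u has_vector_derivative u') (at t)"
  shows "u' \<in> Z"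
proof -
  have "br u' x = 0" for x
    by (rule has_vector_derivative_annihilated[OF bracket.bounded_linear_left _ assms(2)])
      (use assms(1) in simp)
  then show ?thesis unfolding center_def by simp
qed

lemma has_vector_derivative_in_orth_center:
  assumes "\<And>s. u s \<in> V" and "(u has_vector_derivative u') (at t)"
  shows "u' \<in> V"
proof -
  have "g u' c = 0" if "c \<in> Z" for c
    by (rule has_vector_derivative_annihilated[OF form.bounded_linear_left _ assms(2)])
      (rule form_orth_center[OF assms(1) that])
  then show ?thesis unfolding orth_def by simp
qed

lemma expop_in_orth_center:
  assumes "y \<in> V"
  shows "expop (J z) t y \<in> V"
proof -
  have powers: "(J z ^^ n) y \<in> V" for n using assms by (cases n) simp_all
  have "g (expop (J z) t y) c = 0" if "c \<in> Z" for c
    by (rule expop_annihilated[OF Jop.bounded_linear_right[THEN bounded_linear.linear]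
          form.bounded_linear_left]) (rule form_orth_center[OF powers that])
  then show ?thesis unfolding orth_def by simp
qed

lemma cov_deriv_split:
  assumes "z0 \<in> Z" "X t \<in> V" "a t \<in> Z" "b t \<in> V"
    and "(a has_vector_derivative a') (at t)" "(b has_vector_derivative b') (at t)"
  shows "cov_deriv g br (\<lambda>s. z0 + X s) (\<lambda>s. a s + b s) t
       = (a' + (1/2) *\<^sub>R br (X t) (b t))
         + (b' - (1/2) *\<^sub>R J z0 (b t) - (1/2) *\<^sub>R J (a t) (X t))"
proof -
  have "vector_derivative (\<lambda>s. a s + b s) (at t) = a' + b'"
    using has_vector_derivative_add[OF assms(5,6)] by (rule vector_derivative_at)
  then show ?thesis
    using lc_nabla_split[OF assms(1,3,2,4)] by (simp add: cov_deriv_def algebra_simps)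
qed

lemma jacobi_operator_split:
  assumes z0: "z0 \<in> Z"
    and X: "\<And>t. X t \<in> V" "\<And>t. (X has_vector_derivative J z0 (X t)) (at t)"
    and zY: "\<And>t. zY t \<in> Z" "\<And>t. (zY has_vector_derivative z1 t) (at t)"
      "\<And>t. (z1 has_vector_derivative z2 t) (at t)"
    and W: "\<And>t. W t \<in> V" "\<And>t. (W has_vector_derivative W1 t) (at t)"
      "\<And>t. (W1 has_vector_derivative W2 t) (at t)"
  defines "c \<equiv> \<lambda>t. z0 + X t" and "Y \<equiv> \<lambda>t. zY t + W t"
  shows "cov_deriv g br c (cov_deriv g br c Y) t + curv g br (Y t) (c t) (c t)
       = (z2 t - br (W1 t) (X t) - br (W t) (J z0 (X t)))
         + (W2 t - J z0 (W1 t) - J (z1 t - br (W t) (X t)) (X t))"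
proof -
  have z1: "z1 t \<in> Z" for t by (rule has_vector_derivative_in_center[OF zY(1,2)])
  have W1: "W1 t \<in> V" for t by (rule has_vector_derivative_in_orth_center[OF W(1,2)])
  define A where "A t = z1 t + (1/2) *\<^sub>R br (X t) (W t)" for t
  define B where "B t = W1 t - (1/2) *\<^sub>R J z0 (W t) - (1/2) *\<^sub>R J (zY t) (X t)" for t
  have A_center: "A t \<in> Z" for t
    unfolding A_def by (intro center_closed z1 bracket_in_center)
  have B_orth: "B t \<in> V" for t
    unfolding B_def by (intro orth_center_closed W1 Jop_in_orth)
  have cov1: "cov_deriv g br c Y = (\<lambda>t. A t + B t)"
    unfolding c_def Y_def A_def B_def
    by (rule ext, rule cov_deriv_split[OF z0 X(1) zY(1) W(1) zY(2) W(2)])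
  have dA: "(A has_vector_derivative
      z2 t + (1/2) *\<^sub>R (br (X t) (W1 t) + br (J z0 (X t)) (W t))) (at t)"
    unfolding A_def
    by (intro has_vector_derivative_add has_vector_derivative_scaleR_const zY(3)
        bracket.has_vector_derivative X(2) W(2))
  have dB: "(B has_vector_derivative
      W2 t - (1/2) *\<^sub>R J z0 (W1 t) - (1/2) *\<^sub>R (J (zY t) (J z0 (X t)) + J (z1 t) (X t))) (at t)"
    unfolding B_def
    by (intro has_vector_derivative_diff has_vector_derivative_scaleR_const W(3) zY(2) X(2)
        Jop.has_vector_derivative bounded_linear.has_vector_derivative[OF Jop.bounded_linear_right] W(2))
  have cov2: "cov_deriv g br c (cov_deriv g br c Y) t
      = (z2 t + (1/2) *\<^sub>R (br (X t) (W1 t) + br (J z0 (X t)) (W t)) + (1/2) *\<^sub>R br (X t) (B t))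
        + (W2 t - (1/2) *\<^sub>R J z0 (W1 t) - (1/2) *\<^sub>R (J (zY t) (J z0 (X t)) + J (z1 t) (X t))
           - (1/2) *\<^sub>R J z0 (B t) - (1/2) *\<^sub>R J (A t) (X t))"
    unfolding cov1 unfolding c_def by (rule cov_deriv_split[OF z0 X(1) A_center B_orth dA dB])
  have ncc: "nabla (c t) (c t) = 0 + - J z0 (X t)"
  proof -
    have "nabla (c t) (c t) = - ((1/2) *\<^sub>R J z0 (X t)) - (1/2) *\<^sub>R J z0 (X t)"
      using lc_nabla_split[OF z0 z0 X(1) X(1)] by (simp add: c_def)
    also have "\<dots> = 0 + - J z0 (X t)"
      by (rule euclidean_eqI) (simp add: inner_diff_left inner_minus_left)
    finally show ?thesis .
  qed
  have n1: "nabla (Y t) (nabla (c t) (c t))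
      = (1/2) *\<^sub>R br (W t) (- J z0 (X t)) - (1/2) *\<^sub>R J (zY t) (- J z0 (X t))"
    unfolding ncc Y_def
    using lc_nabla_split[OF zY(1) center_closed(1) W(1) orth_center_closed(5)[OF Jop_in_orth]]
    by (simp add: Jop.zero_left)
  have nYc: "nabla (Y t) (c t) = (1/2) *\<^sub>R br (W t) (X t)
      + (- (1/2) *\<^sub>R J (zY t) (X t) - (1/2) *\<^sub>R J z0 (W t))"
    unfolding Y_def c_def using lc_nabla_split[OF zY(1) z0 W(1) X(1)] by (simp add: algebra_simps)
  have n2: "nabla (c t) (nabla (Y t) (c t))
      = (1/2) *\<^sub>R br (X t) (- (1/2) *\<^sub>R J (zY t) (X t) - (1/2) *\<^sub>R J z0 (W t))
        - (1/2) *\<^sub>R J z0 (- (1/2) *\<^sub>R J (zY t) (X t) - (1/2) *\<^sub>R J z0 (W t))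
        - (1/2) *\<^sub>R J ((1/2) *\<^sub>R br (W t) (X t)) (X t)"
    unfolding nYc unfolding c_def
    by (rule lc_nabla_split[OF z0 center_closed(4)[OF bracket_in_center] X(1)])
      (intro orth_center_closed Jop_in_orth)
  have n3: "nabla (br (Y t) (c t)) (c t) = - (1/2) *\<^sub>R J (br (W t) (X t)) (X t)"
  proof -
    have "br (Y t) (c t) = br (W t) (X t) + 0"
      using zY(1) z0 by (simp add: Y_def c_def bracket.add_left bracket.add_right)
    then show ?thesis
      using lc_nabla_split[OF bracket_in_center z0 orth_center_closed(1) X(1)]
      by (simp add: c_def bracket.zero_left Jop.zero_right)
  qed
  show ?thesis
    unfolding cov2 curv_def n1 n2 n3 ncc[symmetric] A_def B_def
    by (rule euclidean_eqI)
      (simp add: bracket.add_left bracket.add_right bracket.diff_left bracket.diff_right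
        bracket.scaleR_left bracket.scaleR_right bracket.minus_left bracket.minus_right
        Jop.add_left Jop.add_right Jop.diff_left Jop.diff_right Jop.scaleR_left Jop.scaleR_right
        Jop.minus_left Jop.minus_right br_antisym[of "W t"] br_antisym[of "W1 t"]
        inner_add_left inner_diff_left inner_scaleR_left inner_minus_left field_simps)
qed

lemma is_jacobi_iff_constant:
  assumes dq: "\<And>t. (q has_vector_derivative q' t) (at t)"
    and q: "\<And>t. q t \<in> Z" and P: "\<And>\<zeta> t. P \<zeta> t \<in> V"
    and jacobi_eq: "\<And>t. cov_deriv g br c (cov_deriv g br c Y) t + curv g br (Y t) (c t) (c t)
                         = q' t + P (q t) t"
  shows "is_jacobi g br c Y \<longleftrightarrow> (\<exists>\<zeta>\<in>Z. \<forall>t. q t = \<zeta> \<and> P \<zeta> t = 0)"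
proof -
  have "is_jacobi g br c Y \<longleftrightarrow> (\<forall>t. q' t = 0 \<and> P (q t) t = 0)"
    unfolding is_jacobi_def jacobi_eq
    using center_orth_add_eq_0_iff[OF has_vector_derivative_in_center[OF q dq] P] by blast
  also have "\<dots> \<longleftrightarrow> (\<exists>\<zeta>. \<forall>t. q t = \<zeta>) \<and> (\<forall>t. P (q t) t = 0)"
    using has_vector_derivative_zero_iff_constant[OF dq] by blast
  also have "\<dots> \<longleftrightarrow> (\<exists>\<zeta>\<in>Z. \<forall>t. q t = \<zeta> \<and> P \<zeta> t = 0)"
    using q by (metis (no_types))
  finally show ?thesis .
qed

lemma jacobi_field_iff:
  fixes z v :: "real \<Rightarrow> 'a"
  assumes z0: "z0 \<in> Z" and x0: "x0 \<in> V" and z: "\<And>t. z t \<in> Z" and v: "\<And>t. v t \<in> V"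
    and z_smooth: "smooth_curve z" and v_smooth: "smooth_curve v"
  defines "X \<equiv> \<lambda>t. expop (J z0) t x0"
    and "W \<equiv> \<lambda>t. expop (J z0) t (v t)"
    and "z' \<equiv> \<lambda>t. vector_derivative z (at t)"
    and "v' \<equiv> \<lambda>t. vector_derivative v (at t)"
    and "v'' \<equiv> \<lambda>t. vector_derivative (\<lambda>s. vector_derivative v (at s)) (at t)"
  shows "is_jacobi g br (\<lambda>t. z0 + X t) (\<lambda>t. z t + W t)
     \<longleftrightarrow> (\<exists>\<zeta>\<in>Z. \<forall>t. z' t - br (W t) (X t) = \<zeta>
            \<and> expop (J z0) t (v'' t) + expop (J z0) t (J z0 (v' t)) - J \<zeta> (X t) = 0)"
proof -
  have L: "linear (J z0)" by (rule Jop.bounded_linear_right[THEN bounded_linear.linear])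
  define W1 where "W1 = (\<lambda>t. J z0 (W t) + expop (J z0) t (v' t))"
  have dX: "(X has_vector_derivative J z0 (X t)) (at t)" for t
    unfolding X_def by (rule has_vector_derivative_expop[OF L])
  have dv: "(v has_vector_derivative v' t) (at t)" "(v' has_vector_derivative v'' t) (at t)" for t
    unfolding v'_def v''_def
    by (rule smooth_curve_has_vector_derivative smooth_curve_has_second_vector_derivative,
        rule v_smooth)+
  have dW: "(W has_vector_derivative W1 t) (at t)"
    "(W1 has_vector_derivative
       J z0 (W1 t) + expop (J z0) t (v'' t) + expop (J z0) t (J z0 (v' t))) (at t)" for t
    using has_second_vector_derivative_expop_curve[OF L dv(1)[of t] dv(2)[of t]]
    by (simp_all add: W_def W1_def)
  have dz: "(z has_vector_derivative z' t) (at t)"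
    "(z' has_vector_derivative vector_derivative z' (at t)) (at t)" for t
    unfolding z'_def
    by (rule smooth_curve_has_vector_derivative smooth_curve_has_second_vector_derivative,
        rule z_smooth)+
  define q where "q t = z' t - br (W t) (X t)" for t
  define q' where
    "q' t = vector_derivative z' (at t) - br (W1 t) (X t) - br (W t) (J z0 (X t))" for t
  define P where
    "P \<zeta> t = expop (J z0) t (v'' t) + expop (J z0) t (J z0 (v' t)) - J \<zeta> (X t)" for \<zeta> t
  have X_orth: "X t \<in> V" for t unfolding X_def by (rule expop_in_orth_center[OF x0])
  have W_orth: "W t \<in> V" for t unfolding W_def by (rule expop_in_orth_center[OF v])
  have jacobi_eq: "cov_deriv g br (\<lambda>t. z0 + X t)
        (cov_deriv g br (\<lambda>t. z0 + X t) (\<lambda>t. z t + W t)) t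
      + curv g br (z t + W t) (z0 + X t) (z0 + X t) = q' t + P (q t) t" for t
    using jacobi_operator_split[OF z0 X_orth dX z dz W_orth dW]
    by (simp add: q_def q'_def P_def algebra_simps)
  have dq: "(q has_vector_derivative q' t) (at t)" for t
    unfolding q_def q'_def
    using has_vector_derivative_diff[OF dz(2) bracket.has_vector_derivative[OF dW(1) dX]]
    by (simp add: algebra_simps)
  have q_center: "q t \<in> Z" for t
    unfolding q_def
    by (intro center_closed has_vector_derivative_in_center[OF z dz(1)] bracket_in_center)
  have v'_orth: "v' t \<in> V" and v''_orth: "v'' t \<in> V" for t
    using has_vector_derivative_in_orth_center[OF v dv(1)]
      has_vector_derivative_in_orth_center[OF _ dv(2)] by blast+
  have P_orth: "P \<zeta> t \<in> V" for \<zeta> t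
    unfolding P_def by (intro orth_center_closed expop_in_orth_center v'_orth v''_orth Jop_in_orth)
  show ?thesis
    using is_jacobi_iff_constant[where q = q and q' = q' and P = P,
        OF dq q_center P_orth jacobi_eq]
    by (simp add: q_def P_def)
qed

end

theorem mainTheorem2:
  fixes br :: "'a::euclidean_space \<Rightarrow> 'a \<Rightarrow> 'a"
    and g :: "'a \<Rightarrow> 'a \<Rightarrow> real"
    and z0 x0 :: 'a
    and z v :: "real \<Rightarrow> 'a"
  assumes br_bilinear: "bilinear br"
    and br_antisym: "\<And>x y. br x y = - br y x"
    and br_jacobi: "\<And>x y w. br x (br y w) + br y (br w x) + br w (br x y) = 0"
    and two_step: "\<And>x y w. br (br x y) w = 0"
    and g_bilinear: "bilinear g"
    and g_sym: "\<And>x y. g x y = g y x"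
    and g_nondeg: "nondegenerate g"
    and g_nondeg_center: "nondegenerate_on g (center br)"
    and z0_in: "z0 \<in> center br"
    and x0_in: "x0 \<in> orth g (center br)"
    and z_in: "\<And>t. z t \<in> center br"
    and v_in: "\<And>t. v t \<in> orth g (center br)"
    and z_smooth: "smooth_curve z"
    and v_smooth: "smooth_curve v"
  shows "is_jacobi g br (\<lambda>t. z0 + expop (Jop g br z0) t x0)
            (\<lambda>t. z t + expop (Jop g br z0) t (v t))
         \<longleftrightarrow> (\<exists>\<zeta>\<in>center br. \<forall>t.
              vector_derivative z (at t)
                - br (expop (Jop g br z0) t (v t)) (expop (Jop g br z0) t x0) = \<zeta>
            \<and> expop (Jop g br z0) t (vector_derivative (\<lambda>s. vector_derivative v (at s)) (at t))
                + expop (Jop g br z0) t (Jop g br z0 (vector_derivative v (at t)))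
                - Jop g br \<zeta> (expop (Jop g br z0) t x0) = 0)"
proof -
  interpret two_step_metric_lie_algebra br g
    using br_bilinear br_antisym two_step g_bilinear g_sym g_nondeg g_nondeg_center
    by unfold_locales
  show ?thesis
    by (rule jacobi_field_iff[OF z0_in x0_in z_in v_in z_smooth v_smooth])
qed

end
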